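(* Let $\ell\ge2$ and $t\ge0$ be integers, $C\subseteq\mathbb{F}_q^n$ a linear code and $A,B\subseteq\mathbb{F}_q^n$ linear codes with $A*B\subseteq C^\perp$, $\dim A>t$, $\mathrm{d}(A^\perp)>t$ and $\mathrm{d}(A)+\mathrm{d}(C)>n$. Let $\mathbf{y}=\mathbf{c}+\mathbf{e}$ with $\mathbf{c}\in C$, $\mathrm{w}(\mathbf{e})=t$, $I_{\mathbf{e}}=\mathrm{supp}(\mathbf{e})$. Let $M_1=\{\mathbf{a}\in A\mid \langle \mathbf{a}*\mathbf{y},\mathbf{b}\rangle=0\ \forall \mathbf{b}\in B\}$, and for $i=2,\dots,\ell$, $M_i=\{\mathbf{a}\in A\mid \langle \mathbf{a}*\mathbf{y}^i,\mathbf{v}\rangle=0\ \forall \mathbf{v}\in (B^{\perp}*C^{i-1})^{\perp}\}$, and $M=\bigcap_{i=1}^\ell M_i$. If $A(I_{\mathbf{e}})=M$, then $$\dim B+\sum_{i=2}^{\ell}\dim (B^\perp*C^{i-1})^\perp\ge t.$$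
   Context: All codes are $\mathbb{F}_q$-linear subspaces of $\mathbb{F}_q^n$. $\mathbf{u}*\mathbf{v}=(u_1v_1,\dots,u_nv_n)$, $\mathbf{u}^i=(u_1^i,\dots,u_n^i)$; $A*B$ is the span of all $\mathbf{a}*\mathbf{b}$; $C^1=C$, $C^i=C*C^{i-1}$. $\langle\mathbf{u},\mathbf{v}\rangle=\sum_iu_iv_i$, $X^\perp$ the dual. $\mathrm{w}$ Hamming weight, $\mathrm{d}$ minimum distance, $\mathrm{supp}(\mathbf{x})=\{i:x_i\ne0\}$. $A(J)=\{\mathbf{a}\in A: a_j=0\ \forall j\in J\}\subseteq\mathbb{F}_q^n$. *)

theory Defs
  imports Main "HOL-Library.Function_Algebras" "HOL-Library.Extended_Nat"
begin

text \<open>Vectors of \<open>F_q^n\<close> are functions \<open>'n \<Rightarrow> 'a\<close> with \<open>'n\<close> a finite index type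
  (so \<open>n = CARD('n)\<close>) and \<open>'a\<close> a finite field. Addition and the componentwise
  (Schur) product \<open>u * v\<close> and powers \<open>u ^ i\<close> are the pointwise operations from
  Function_Algebras.\<close>

definition cscale :: "'a::field \<Rightarrow> ('n \<Rightarrow> 'a) \<Rightarrow> ('n \<Rightarrow> 'a)" where
  "cscale c v = (\<lambda>i. c * v i)"

interpretation fv: vector_space "cscale :: 'a::field \<Rightarrow> ('n \<Rightarrow> 'a) \<Rightarrow> ('n \<Rightarrow> 'a)"
  by unfold_locales (auto simp: cscale_def fun_eq_iff algebra_simps)

abbreviation linear_code :: "('n \<Rightarrow> 'a::field) set \<Rightarrow> bool" where
  "linear_code X \<equiv> fv.subspace X"

definition star :: "('n \<Rightarrow> 'a::field) set \<Rightarrow> ('n \<Rightarrow> 'a) set \<Rightarrow> ('n \<Rightarrow> 'a) set" where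
  "star A B = fv.span {a * b | a b. a \<in> A \<and> b \<in> B}"

text \<open>\<open>code_pow C i = C^i\<close> for \<open>i \<ge> 1\<close>: \<open>C^1 = C\<close>, \<open>C^i = C * C^(i-1)\<close>.
  The value at 0 (span of the all-one vector) is never used.\<close>
fun code_pow :: "('n \<Rightarrow> 'a::field) set \<Rightarrow> nat \<Rightarrow> ('n \<Rightarrow> 'a) set" where
  "code_pow C 0 = fv.span {1}"
| "code_pow C (Suc 0) = C"
| "code_pow C (Suc (Suc k)) = star C (code_pow C (Suc k))"

definition inner_prod :: "('n::finite \<Rightarrow> 'a::field) \<Rightarrow> ('n \<Rightarrow> 'a) \<Rightarrow> 'a" where
  "inner_prod u v = (\<Sum>i\<in>UNIV. u i * v i)"

definition dual :: "('n::finite \<Rightarrow> 'a::field) set \<Rightarrow> ('n \<Rightarrow> 'a) set" where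
  "dual X = {v. \<forall>x\<in>X. inner_prod x v = 0}"

definition supp :: "('n \<Rightarrow> 'a::zero) \<Rightarrow> 'n set" where
  "supp x = {i. x i \<noteq> 0}"

definition hweight :: "('n::finite \<Rightarrow> 'a::zero) \<Rightarrow> nat" where
  "hweight x = card (supp x)"

text \<open>Minimum distance, with the convention \<open>d({0}) = \<infinity>\<close>.\<close>
definition min_dist :: "('n::finite \<Rightarrow> 'a::zero) set \<Rightarrow> enat" where
  "min_dist X = Inf {enat (hweight x) | x. x \<in> X \<and> x \<noteq> 0}"

definition shortened :: "('n \<Rightarrow> 'a::zero) set \<Rightarrow> 'n set \<Rightarrow> ('n \<Rightarrow> 'a) set" where
  "shortened A J = {a \<in> A. \<forall>j\<in>J. a j = 0}"

end

theory Submission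
  imports Defs
begin

text \<open>Let \<open>I = supp e\<close> and let \<open>S\<close> consist of the vectors \<open>y * b\<close> (\<open>b \<in> B\<close>) and
  \<open>y^i * v\<close> (\<open>v \<in> (B\<^sup>\<perp> * C^(i-1))\<^sup>\<perp>\<close>). Then \<open>M = A \<inter> S\<^sup>\<perp>\<close>, and cutting a subspace
  with \<open>S\<^sup>\<perp>\<close> lowers its dimension by at most \<open>dim (span S) \<le> dim B + \<Sum> dim (B\<^sup>\<perp> * C^(i-1))\<^sup>\<perp>\<close>.
  On the other hand \<open>d(A\<^sup>\<perp>) > t = |I|\<close> says that no nonzero vector supported on \<open>I\<close> is
  orthogonal to \<open>A\<close>; hence \<open>A\<close> together with the vectors vanishing on \<open>I\<close> spans the whole
  space, and \<open>A(I) = A \<inter> {x. x|\<^sub>I = 0}\<close> has codimension exactly \<open>t\<close> in \<open>A\<close>.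
  Since \<open>A(I) = M\<close>, the codimension \<open>t\<close> is bounded by the sum of dimensions.\<close>

lemma sum_apply: "(\<Sum>v\<in>S. f v) j = (\<Sum>v\<in>S. f v j)"
  by (induction S rule: infinite_finite_induct) auto

definition unit_vec :: "'n \<Rightarrow> 'n \<Rightarrow> 'a::field" where
  "unit_vec k = (\<lambda>i. if i = k then 1 else 0)"

lemma inj_unit_vec: "inj unit_vec"
  by (rule injI) (metis unit_vec_def one_neq_zero)

lemma sum_unit_vec_apply:
  assumes "finite I"
  shows "(\<Sum>k\<in>I. cscale (c k) (unit_vec k)) j = (if j \<in> I then c j else (0::'a::field))"
  using assms by (simp add: sum_apply cscale_def unit_vec_def if_distrib cong: if_cong)

lemma independent_unit_vecs:
  fixes I :: "'n::finite set"
  shows "fv.independent (unit_vec ` I :: ('n \<Rightarrow> 'a::field) set)"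
proof (rule fv.independent_if_scalars_zero)
  show "finite (unit_vec ` I :: ('n \<Rightarrow> 'a) set)" by simp
next
  fix c :: "('n \<Rightarrow> 'a) \<Rightarrow> 'a" and v :: "'n \<Rightarrow> 'a"
  assume sum0: "(\<Sum>u\<in>unit_vec ` I. cscale (c u) u) = 0" and "v \<in> unit_vec ` I"
  then obtain j where j: "j \<in> I" "v = unit_vec j" by auto
  have "(\<Sum>k\<in>I. cscale (c (unit_vec k)) (unit_vec k :: 'n \<Rightarrow> 'a)) = 0"
    using sum0 by (simp add: sum.reindex inj_on_subset[OF inj_unit_vec])
  then show "c v = 0"
    using fun_cong[of _ _ j] sum_unit_vec_apply[of I "\<lambda>k. c (unit_vec k)" j] j by auto
qed

lemma span_unit_vecs:
  fixes I :: "'n::finite set"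
  shows "fv.span (unit_vec ` I :: ('n \<Rightarrow> 'a::field) set) = {x. supp x \<subseteq> I}"
proof
  have subspace: "fv.subspace {x :: 'n \<Rightarrow> 'a. supp x \<subseteq> I}"
    by (auto simp: fv.subspace_def supp_def cscale_def subset_iff) (metis add.right_neutral)
  show "fv.span (unit_vec ` I :: ('n \<Rightarrow> 'a) set) \<subseteq> {x. supp x \<subseteq> I}"
    by (rule fv.span_minimal[OF _ subspace]) (auto simp: supp_def unit_vec_def split: if_splits)
next
  show "{x. supp x \<subseteq> I} \<subseteq> fv.span (unit_vec ` I :: ('n \<Rightarrow> 'a) set)"
  proof
    fix x :: "'n \<Rightarrow> 'a" assume "x \<in> {x. supp x \<subseteq> I}"
    then have "x = (\<Sum>k\<in>I. cscale (x k) (unit_vec k))"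
      by (auto simp: fun_eq_iff sum_unit_vec_apply supp_def)
    also have "\<dots> \<in> fv.span (unit_vec ` I)"
      by (intro fv.span_sum fv.span_scale fv.span_base) simp
    finally show "x \<in> fv.span (unit_vec ` I)" .
  qed
qed

lemma dim_supported_on:
  fixes I :: "'n::finite set"
  shows "fv.dim {x :: 'n \<Rightarrow> 'a::field. supp x \<subseteq> I} = card I"
  using fv.dim_span_eq_card_independent[OF independent_unit_vecs, of I]
  by (simp add: span_unit_vecs card_image inj_on_subset[OF inj_unit_vec])

interpretation fvd: finite_dimensional_vector_space
  "cscale :: 'a::field \<Rightarrow> ('n::finite \<Rightarrow> 'a) \<Rightarrow> ('n \<Rightarrow> 'a)" "range unit_vec"
  by unfold_locales (simp_all add: independent_unit_vecs span_unit_vecs)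

interpretation fvp: finite_dimensional_vector_space_pair_1
  "cscale :: 'a::field \<Rightarrow> ('n::finite \<Rightarrow> 'a) \<Rightarrow> ('n \<Rightarrow> 'a)" "range unit_vec" cscale
  by unfold_locales

lemma inner_prod_comm: "inner_prod u v = inner_prod v u"
  unfolding inner_prod_def by (simp add: mult.commute)

lemma inner_prod_add_right: "inner_prod u (v + w) = inner_prod u v + inner_prod u w"
  unfolding inner_prod_def by (simp add: distrib_left sum.distrib)

lemma inner_prod_scale_right: "inner_prod u (cscale c v) = c * inner_prod u v"
  unfolding inner_prod_def cscale_def by (simp add: sum_distrib_left algebra_simps)

lemma inner_prod_diff_left: "inner_prod (u - v) w = inner_prod u w - inner_prod v w"
  unfolding inner_prod_def by (simp add: left_diff_distrib sum_subtractf)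

lemma inner_prod_scale_left: "inner_prod (cscale c u) v = c * inner_prod u v"
  using inner_prod_scale_right inner_prod_comm by metis

lemma inner_prod_unit_vec: "inner_prod (unit_vec j) v = v j"
  unfolding inner_prod_def unit_vec_def by (simp add: if_distrib[where f="\<lambda>x. x * _"] cong: if_cong)

lemma inner_prod_mult_swap: "inner_prod (u * v) w = inner_prod (w * u) v"
  unfolding inner_prod_def by (simp add: algebra_simps)

lemma subspace_dual: "fv.subspace (dual X)"
  unfolding fv.subspace_def dual_def
  by (auto simp: inner_prod_add_right inner_prod_scale_right) (simp add: inner_prod_def)

lemma dual_antimono: "X \<subseteq> Y \<Longrightarrow> dual Y \<subseteq> dual X"
  unfolding dual_def by blast

lemma dual_Un: "dual (X \<union> Y) = dual X \<inter> dual Y"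
  unfolding dual_def by blast

lemma dual_UN: "dual (\<Union>i\<in>K. X i) = (\<Inter>i\<in>K. dual (X i))"
  unfolding dual_def by blast

lemma mem_dual_mult_image: "a \<in> dual ((*) u ` B) \<longleftrightarrow> (\<forall>b\<in>B. inner_prod (a * u) b = 0)"
  unfolding dual_def by (simp add: inner_prod_mult_swap)

lemma dual_span: "dual (fv.span X) = dual X"
proof
  show "dual (fv.span X) \<subseteq> dual X"
    by (rule dual_antimono[OF fv.span_superset])
  show "dual X \<subseteq> dual (fv.span X)"
  proof
    fix v assume "v \<in> dual X"
    then have "X \<subseteq> dual {v}"
      unfolding dual_def by (auto simp: inner_prod_comm)
    then have "fv.span X \<subseteq> dual {v}"
      using fv.span_minimal subspace_dual by blast
    then show "v \<in> dual (fv.span X)"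
      unfolding dual_def by (auto simp: inner_prod_comm)
  qed
qed

lemma dim_le_dim_Int_dual_singleton:
  fixes X :: "('n::finite \<Rightarrow> 'a::field) set"
  assumes X: "fv.subspace X"
  shows "fv.dim X \<le> fv.dim (X \<inter> dual {w}) + 1"
proof (cases "X \<subseteq> dual {w}")
  case True
  then show ?thesis by (simp add: Int_absorb2)
next
  case False
  then obtain x0 where x0: "x0 \<in> X" "inner_prod w x0 \<noteq> 0"
    unfolding dual_def by auto
  have "X \<subseteq> fv.span (insert x0 (X \<inter> dual {w}))"
  proof
    fix x assume x: "x \<in> X"
    define c where "c = inner_prod w x / inner_prod w x0"
    have "x - cscale c x0 \<in> X \<inter> dual {w}"
      using x x0 X unfolding dual_def c_def
      by (auto simp: inner_prod_comm[of w] inner_prod_diff_left inner_prod_scale_left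
          intro: fv.subspace_diff fv.subspace_scale)
    then have "(x - cscale c x0) + cscale c x0 \<in> fv.span (insert x0 (X \<inter> dual {w}))"
      by (intro fv.span_add fv.span_scale fv.span_base) auto
    then show "x \<in> fv.span (insert x0 (X \<inter> dual {w}))"
      by simp
  qed
  then have "fv.dim X \<le> fv.dim (insert x0 (X \<inter> dual {w}))"
    by (rule fvd.dim_mono)
  also have "\<dots> \<le> fv.dim (X \<inter> dual {w}) + 1"
    by (simp add: fvd.dim_insert)
  finally show ?thesis .
qed

lemma dim_le_dim_Int_dual_card:
  fixes X :: "('n::finite \<Rightarrow> 'a::field) set"
  assumes "finite F" and "fv.subspace X"
  shows "fv.dim X \<le> fv.dim (X \<inter> dual F) + card F"
  using assms
proof (induction F rule: finite_induct)
  case empty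
  then show ?case by (simp add: dual_def)
next
  case (insert w F)
  have "X \<inter> dual (insert w F) = (X \<inter> dual F) \<inter> dual {w}"
    unfolding dual_def by auto
  moreover have "fv.subspace (X \<inter> dual F)"
    using insert.prems subspace_dual fv.subspace_inter by blast
  ultimately have "fv.dim (X \<inter> dual F) \<le> fv.dim (X \<inter> dual (insert w F)) + 1"
    using dim_le_dim_Int_dual_singleton by metis
  then show ?case
    using insert by simp
qed

lemma dim_le_dim_Int_dual:
  fixes X S :: "('n::finite \<Rightarrow> 'a::field) set"
  assumes "fv.subspace X"
  shows "fv.dim X \<le> fv.dim (X \<inter> dual S) + fv.dim S"
proof -
  obtain G where G: "G \<subseteq> S" "fv.independent G" "S \<subseteq> fv.span G" "card G = fv.dim S"
    by (rule fv.basis_exists)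
  have "dual G = dual S"
    using dual_antimono[OF G(1)] dual_antimono[OF G(3)] dual_span[of G] by blast
  then show ?thesis
    using dim_le_dim_Int_dual_card[OF fvd.finiteI_independent[OF G(2)] assms] G(4) by simp
qed

lemma dual_subset_0_imp_UNIV:
  fixes V :: "('n::finite \<Rightarrow> 'a::field) set"
  assumes "fv.subspace V" and "dual V \<subseteq> {0}"
  shows "V = UNIV"
proof (rule fvd.subspace_dim_equal)
  show "fv.dim (UNIV :: ('n \<Rightarrow> 'a) set) \<le> fv.dim V"
    using dim_le_dim_Int_dual[OF fv.subspace_UNIV, of V] assms(2)
    by (simp flip: fvd.dim_eq_0)
qed (use assms(1) fv.subspace_UNIV in auto)

lemma dim_Un_le:
  fixes S T :: "('n::finite \<Rightarrow> 'a::field) set"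
  shows "fv.dim (S \<union> T) \<le> fv.dim S + fv.dim T"
proof -
  obtain GS where GS: "fv.independent GS" "S \<subseteq> fv.span GS" "card GS = fv.dim S"
    by (rule fv.basis_exists)
  obtain GT where GT: "fv.independent GT" "T \<subseteq> fv.span GT" "card GT = fv.dim T"
    by (rule fv.basis_exists)
  have "S \<union> T \<subseteq> fv.span (GS \<union> GT)"
    using GS(2) GT(2) fv.span_mono[of GS "GS \<union> GT"] fv.span_mono[of GT "GS \<union> GT"] by blast
  then have "fv.dim (S \<union> T) \<le> card (GS \<union> GT)"
    by (rule fv.dim_le_card) (simp add: fvd.finiteI_independent GS(1) GT(1))
  also have "\<dots> \<le> fv.dim S + fv.dim T"
    using card_Un_le[of GS GT] GS(3) GT(3) by simp
  finally show ?thesis .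
qed

lemma dim_UN_le:
  fixes S :: "'i \<Rightarrow> ('n::finite \<Rightarrow> 'a::field) set"
  assumes "finite K"
  shows "fv.dim (\<Union>i\<in>K. S i) \<le> (\<Sum>i\<in>K. fv.dim (S i))"
  using assms
proof (induction K rule: finite_induct)
  case (insert k K)
  then show ?case
    using dim_Un_le[of "S k" "\<Union>i\<in>K. S i"] by simp
qed simp

lemma dim_mult_image_le:
  fixes S :: "('n::finite \<Rightarrow> 'a::field) set"
  shows "fv.dim ((*) u ` S) \<le> fv.dim S"
proof (rule fvp.dim_image_le)
  show "Vector_Spaces.linear cscale cscale ((*) u :: ('n \<Rightarrow> 'a) \<Rightarrow> _)"
    unfolding Vector_Spaces.linear_iff
    by (auto simp: fv.vector_space_axioms cscale_def fun_eq_iff algebra_simps)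
qed

lemma min_dist_le_hweight: "x \<in> X \<Longrightarrow> x \<noteq> 0 \<Longrightarrow> min_dist X \<le> enat (hweight x)"
  unfolding min_dist_def by (rule Inf_lower) blast

lemma hweight_le_card: "supp (x :: 'n::finite \<Rightarrow> 'a::zero) \<subseteq> I \<Longrightarrow> hweight x \<le> card I"
  unfolding hweight_def by (rule card_mono) (simp_all add: finite_subset)

lemma dim_shortened:
  fixes A :: "('n::finite \<Rightarrow> 'a::field) set"
  assumes A: "fv.subspace A" and dist: "min_dist (dual A) > enat (card I)"
  shows "fv.dim A = fv.dim (shortened A I) + card I"
proof -
  define Z :: "('n \<Rightarrow> 'a) set" where "Z = {x. supp x \<subseteq> - I}"
  define AZ where "AZ = {a + z |a z. a \<in> A \<and> z \<in> Z}"
  have Z: "fv.subspace Z"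
    unfolding Z_def by (simp flip: span_unit_vecs)
  have "dual AZ \<subseteq> {0}"
  proof
    fix v assume v: "v \<in> dual AZ"
    have "A \<subseteq> AZ"
      unfolding AZ_def using fv.subspace_0[OF Z] by (metis (mono_tags, lifting) add.right_neutral mem_Collect_eq subsetI)
    then have "v \<in> dual A"
      using v dual_antimono by blast
    moreover have "supp v \<subseteq> I"
    proof
      fix j assume "j \<in> supp v"
      have "j \<notin> I \<Longrightarrow> unit_vec j \<in> Z"
        unfolding Z_def by (auto simp: supp_def unit_vec_def)
      then have "j \<notin> I \<Longrightarrow> 0 + unit_vec j \<in> AZ"
        unfolding AZ_def using fv.subspace_0[OF A] by blast
      then show "j \<in> I"
        using v \<open>j \<in> supp v\<close> unfolding dual_def supp_def by (force simp: inner_prod_unit_vec)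
    qed
    ultimately show "v \<in> {0}"
      using dist min_dist_le_hweight[of v "dual A"] hweight_le_card[of v I]
      by (metis enat_ord_simps(1) not_le order_trans singletonI)
  qed
  then have "AZ = UNIV"
    unfolding AZ_def by (intro dual_subset_0_imp_UNIV fv.subspace_sums A Z)
  then have "fv.dim AZ = card (UNIV :: 'n set)"
    using dim_supported_on[of UNIV, where 'a='a] by simp
  moreover have "fv.dim Z = card (- I)"
    unfolding Z_def by (rule dim_supported_on)
  moreover have "card (- I) + card I = card (UNIV :: 'n set)"
    using card_Un_disjoint[of "- I" I] by (simp add: Compl_partition2)
  moreover have "shortened A I = A \<inter> Z"
    unfolding shortened_def Z_def supp_def by auto
  ultimately show ?thesis
    using fvd.dim_sums_Int[OF A Z] unfolding AZ_def by simp
qed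

theorem theorem3p10:
  fixes A B C :: "('n::finite \<Rightarrow> 'a::{field,finite}) set"
    and y c e :: "'n \<Rightarrow> 'a"
    and l t :: nat
  assumes "l \<ge> 2"
    and "linear_code C" and "linear_code A" and "linear_code B"
    and "star A B \<subseteq> dual C"
    and "fv.dim A > t"
    and "min_dist (dual A) > enat t"
    and "min_dist A + min_dist C > enat (card (UNIV :: 'n set))"
    and "y = c + e" and "c \<in> C" and "hweight e = t"
  defines "M \<equiv> {a \<in> A. \<forall>b\<in>B. inner_prod (a * y) b = 0}
              \<inter> (\<Inter>i\<in>{2..l}. {a \<in> A. \<forall>v\<in>dual (star (dual B) (code_pow C (i - 1))).
                                       inner_prod (a * y ^ i) v = 0})"
  assumes "shortened A (supp e) = M"
  shows "fv.dim B + (\<Sum>i=2..l. fv.dim (dual (star (dual B) (code_pow C (i - 1))))) \<ge> t"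
proof -
  \<comment> \<open>The hypotheses on \<open>C\<close>, \<open>dim A\<close>, \<open>d(A) + d(C)\<close> and \<open>y = c + e\<close> describe the decoding
    setting of the paper; the dimension count needs none of them.\<close>
  define D where "D i = dual (star (dual B) (code_pow C (i - 1)))" for i
  define S where "S = (*) y ` B \<union> (\<Union>i\<in>{2..l}. (*) (y ^ i) ` D i)"
  have "M = A \<inter> dual S"
    unfolding M_def S_def D_def dual_Un dual_UN by (auto simp: mem_dual_mult_image)
  have "fv.dim M + t = fv.dim A"
    using dim_shortened[OF \<open>linear_code A\<close>, of "supp e"] \<open>min_dist (dual A) > enat t\<close>
      \<open>hweight e = t\<close> \<open>shortened A (supp e) = M\<close>
    by (simp add: hweight_def)
  also have "\<dots> \<le> fv.dim M + fv.dim S"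
    using dim_le_dim_Int_dual[OF \<open>linear_code A\<close>, of S] \<open>M = A \<inter> dual S\<close> by simp
  finally have "t \<le> fv.dim S"
    by simp
  also have "\<dots> \<le> fv.dim ((*) y ` B) + (\<Sum>i=2..l. fv.dim ((*) (y ^ i) ` D i))"
    unfolding S_def by (rule order_trans[OF dim_Un_le add_left_mono[OF dim_UN_le]]) simp
  also have "\<dots> \<le> fv.dim B + (\<Sum>i=2..l. fv.dim (D i))"
    by (intro add_mono sum_mono dim_mult_image_le)
  finally show ?thesis
    unfolding D_def .
qed

end
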